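(* For $M>0$ let $\mathcal B_M$ be the set of Borel probability measures on $\mathbb R$ with support contained in $[-M,M]$. Fix $\gamma>0$. Then: (1) for every $\mu\in\mathcal B_M$, $(2+2M^2/\gamma^2)^{-1}P_\gamma\le P_\gamma*\mu\le(\pi\gamma)^{-1}$ pointwise on $\mathbb R$; (2) $\sup_{\mu\in\mathcal B_M}|\log((P_\gamma*\mu)(t))|\le|\log P_\gamma(t)|+C_{M,\gamma}$ for every $t\in\mathbb R$, where $C_{M,\gamma}=\log(2+2M^2/\gamma^2)+|\log\pi\gamma|$; (3) for every compactly supported Borel probability measure $\mu$ and every Borel probability measure $\nu$ on $\mathbb R$ with $\int x^2\nu(dx)<\infty$, the function $(\log(P_\gamma*\mu))\cdot(P_\gamma*\nu)$ is Lebesgue integrable; hence the Cauchy cross-entropy $H_\gamma(\nu,\mu)$ is well defined (and finite).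
   Context: $P_\gamma(x)=\frac{\gamma}{\pi(x^2+\gamma^2)}$ and $(P_\gamma*\mu)(x)=\int P_\gamma(x-t)\mu(dt)$. $H_\gamma(\nu,\mu)=-\int(P_\gamma*\nu)(x)\log(P_\gamma*\mu)(x)\,dx$ (equivalently $\int\ell_\gamma(x,\mu)(P_\gamma*\nu)(x)dx$ with $\ell_\gamma(x,\mu)=-\log[-\frac1\pi\operatorname{Im}G_\mu(x+i\gamma)]$, $G_\mu(z)=\int\frac{\mu(dt)}{z-t}$). *)

theory Defs
  imports "HOL-Probability.Probability"
begin

definition cauchy_kernel :: "real \<Rightarrow> real \<Rightarrow> real" where
  "cauchy_kernel \<gamma> x = \<gamma> / (pi * (x\<^sup>2 + \<gamma>\<^sup>2))"

definition cauchy_conv :: "real \<Rightarrow> real measure \<Rightarrow> real \<Rightarrow> real" where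
  "cauchy_conv \<gamma> \<mu> x = (\<integral>t. cauchy_kernel \<gamma> (x - t) \<partial>\<mu>)"

definition borel_prob :: "real measure \<Rightarrow> bool" where
  "borel_prob \<mu> \<longleftrightarrow> prob_space \<mu> \<and> sets \<mu> = sets borel"

definition measure_support :: "real measure \<Rightarrow> real set" where
  "measure_support \<mu> = {x. \<forall>e>0. emeasure \<mu> (ball x e) > 0}"

definition B_set :: "real \<Rightarrow> real measure set" where
  "B_set M = {\<mu>. borel_prob \<mu> \<and> measure_support \<mu> \<subseteq> {-M..M}}"

end

theory Submission
  imports Defs "HOL-Real_Asymp.Real_Asymp"
begin

(* The elementary inequality (x - t)^2 + gamma^2 <= (2 + 2 t^2/gamma^2) (x^2 + gamma^2) compares
   the shifted kernel P(x - t) with P(x) in both directions.  Averaging over mu, whose mass lies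
   in [-M, M], gives (1), and taking logarithms gives (2).  Averaging over nu instead, the second
   moment of nu shows that P*nu is O(1/(1 + x^2)), while |ln (P*mu)| is O(ln (1 + x^2)); so the
   integrand of (3) is dominated by a multiple of (1 + ln (1 + x^2)) / (1 + x^2), which is
   integrable on the line. *)

lemma one_plus_square_neq_zero: "1 + x\<^sup>2 \<noteq> (0::real)"
  by (smt (verit) zero_le_power2)

lemma abs_ln_le_of_bounds:
  fixes a b y :: real
  assumes "0 < a" and "a \<le> y" and "y \<le> b"
  shows "\<bar>ln y\<bar> \<le> \<bar>ln a\<bar> + \<bar>ln b\<bar>"
proof -
  have "ln a \<le> ln y" "ln y \<le> ln b"
    using assms by auto
  then show ?thesis
    by linarith
qed

lemma integrable_inverse_one_plus_square: "integrable lborel (\<lambda>x::real. 1 / (1 + x\<^sup>2))"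
proof -
  have "set_integrable lborel (einterval (-\<infinity>) \<infinity>) (\<lambda>x::real. 1 / (1 + x\<^sup>2))"
  proof (rule interval_integral_FTC_nonneg(1))
    show "((arctan \<circ> real_of_ereal) \<longlongrightarrow> - (pi / 2)) (at_right (-\<infinity>))"
      unfolding ereal_tendsto_simps by real_asymp
    show "((arctan \<circ> real_of_ereal) \<longlongrightarrow> pi / 2) (at_left \<infinity>)"
      unfolding ereal_tendsto_simps by real_asymp
  qed (auto intro!: derivative_eq_intros continuous_intros simp: field_simps one_plus_square_neq_zero)
  then show ?thesis by (simp add: set_integrable_def)
qed

lemma ln_one_plus_square_div_le:
  fixes x :: real
  defines "L \<equiv> ln (1 + x\<^sup>2)"
  shows "L / (1 + x\<^sup>2) \<le> 2 * (((x\<^sup>2 - 1) * L + x\<^sup>2 + 3) / (1 + x\<^sup>2)\<^sup>2)"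
proof -
  have "0 \<le> L" "L \<le> x\<^sup>2"
    unfolding L_def using ln_add_one_self_le_self[of "x\<^sup>2"] by auto
  then have "0 \<le> (x\<^sup>2 - 3) * L + 2 * x\<^sup>2 + 6"
  proof (cases "x\<^sup>2 \<ge> 3")
    case False
    then have "(- 3) * L \<le> (x\<^sup>2 - 3) * L"
      using \<open>0 \<le> L\<close> by (intro mult_right_mono) auto
    then show ?thesis using \<open>L \<le> x\<^sup>2\<close> False by linarith
  qed (use \<open>0 \<le> L\<close> in simp)
  then have "(1 + x\<^sup>2) * L \<le> 2 * ((x\<^sup>2 - 1) * L + x\<^sup>2 + 3)"
    by (simp add: algebra_simps)
  then have "(1 + x\<^sup>2) * L / (1 + x\<^sup>2)\<^sup>2 \<le> 2 * ((x\<^sup>2 - 1) * L + x\<^sup>2 + 3) / (1 + x\<^sup>2)\<^sup>2"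
    by (rule divide_right_mono) simp
  moreover have "L / (1 + x\<^sup>2) = (1 + x\<^sup>2) * L / (1 + x\<^sup>2)\<^sup>2"
    using one_plus_square_neq_zero[of x] by (simp add: power2_eq_square)
  ultimately show ?thesis
    by simp
qed

lemma integrable_ln_one_plus_square_div: "integrable lborel (\<lambda>x::real. ln (1 + x\<^sup>2) / (1 + x\<^sup>2))"
proof -
  define g where "g x = ((x\<^sup>2 - 1) * ln (1 + x\<^sup>2) + x\<^sup>2 + 3) / (1 + x\<^sup>2)\<^sup>2" for x :: real
  define G where "G x = 3 * arctan x - x * ln (1 + x\<^sup>2) / (1 + x\<^sup>2)" for x :: real
  have major: "ln (1 + x\<^sup>2) / (1 + x\<^sup>2) \<le> 2 * g x" for x
    unfolding g_def by (rule ln_one_plus_square_div_le)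
  have g_nonneg: "0 \<le> g x" for x
  proof -
    have "0 \<le> ln (1 + x\<^sup>2) / (1 + x\<^sup>2)"
      by (intro divide_nonneg_nonneg) auto
    then show ?thesis using major[of x] by linarith
  qed
  have "(G has_real_derivative g x) (at x)" for x
    unfolding G_def g_def using one_plus_square_neq_zero[of x]
    by (intro derivative_eq_intros refl)
       (simp_all add: add_pos_nonneg, simp add: divide_simps, simp add: algebra_simps power2_eq_square)
  moreover have "isCont g x" for x
    unfolding g_def by (intro continuous_intros) (auto simp: one_plus_square_neq_zero)
  moreover have "((G \<circ> real_of_ereal) \<longlongrightarrow> - 3 * (pi / 2)) (at_right (-\<infinity>))"
    unfolding ereal_tendsto_simps G_def by real_asymp
  moreover have "((G \<circ> real_of_ereal) \<longlongrightarrow> 3 * (pi / 2)) (at_left \<infinity>)"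
    unfolding ereal_tendsto_simps G_def by real_asymp
  ultimately have "set_integrable lborel (einterval (-\<infinity>) \<infinity>) g"
    using g_nonneg by (intro interval_integral_FTC_nonneg(1)) auto
  then have "integrable lborel (\<lambda>x. 2 * g x)"
    by (simp add: set_integrable_def)
  then show ?thesis
    by (rule Bochner_Integration.integrable_bound) (use major g_nonneg in \<open>auto intro!: AE_I2\<close>)
qed

lemma cauchy_kernel_pos: "\<gamma> > 0 \<Longrightarrow> 0 < cauchy_kernel \<gamma> x"
  unfolding cauchy_kernel_def by (simp add: add_nonneg_pos)

lemma cauchy_kernel_le: "\<gamma> > 0 \<Longrightarrow> cauchy_kernel \<gamma> x \<le> 1 / (pi * \<gamma>)"
  unfolding cauchy_kernel_def by (simp add: divide_simps add_nonneg_pos power2_eq_square)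

lemma cauchy_kernel_measurable [measurable]: "cauchy_kernel \<gamma> \<in> borel_measurable borel"
  unfolding cauchy_kernel_def by measurable

lemma cauchy_kernel_le_shift:
  assumes "\<gamma> > 0"
  shows "cauchy_kernel \<gamma> x \<le> (2 + 2 * t\<^sup>2 / \<gamma>\<^sup>2) * cauchy_kernel \<gamma> (x - t)"
proof -
  have "(x - t)\<^sup>2 \<le> 2 * x\<^sup>2 + 2 * t\<^sup>2"
    using zero_le_power2[of "x + t"] by (simp add: power2_eq_square algebra_simps)
  moreover have "0 \<le> t\<^sup>2 * x\<^sup>2 / \<gamma>\<^sup>2"
    by simp
  moreover have "(2 + 2 * t\<^sup>2 / \<gamma>\<^sup>2) * (x\<^sup>2 + \<gamma>\<^sup>2) = 2 * x\<^sup>2 + 2 * \<gamma>\<^sup>2 + 2 * (t\<^sup>2 * x\<^sup>2 / \<gamma>\<^sup>2) + 2 * t\<^sup>2"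
    using assms by (simp add: field_simps)
  ultimately have "(x - t)\<^sup>2 + \<gamma>\<^sup>2 \<le> (2 + 2 * t\<^sup>2 / \<gamma>\<^sup>2) * (x\<^sup>2 + \<gamma>\<^sup>2)"
    by (smt (verit) zero_le_power2)
  then show ?thesis
    using assms unfolding cauchy_kernel_def
    by (simp add: divide_simps add_nonneg_pos) (simp add: algebra_simps)
qed

lemma cauchy_kernel_ge_inverse_square:
  assumes "\<gamma> > 0"
  shows "\<gamma> / (pi * (1 + \<gamma>\<^sup>2)) / (1 + x\<^sup>2) \<le> cauchy_kernel \<gamma> x"
proof -
  have "x\<^sup>2 + \<gamma>\<^sup>2 \<le> (1 + \<gamma>\<^sup>2) * (1 + x\<^sup>2)"
    by (simp add: algebra_simps)
  then show ?thesis
    using assms unfolding cauchy_kernel_def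
    by (simp add: divide_simps add_nonneg_pos add_pos_nonneg)
qed

lemma cauchy_kernel_le_inverse_square:
  assumes "\<gamma> > 0"
  shows "cauchy_kernel \<gamma> x \<le> (1 + \<gamma>\<^sup>2) / (pi * \<gamma>) / (1 + x\<^sup>2)"
proof -
  have "\<gamma>\<^sup>2 * (1 + x\<^sup>2) \<le> (1 + \<gamma>\<^sup>2) * (x\<^sup>2 + \<gamma>\<^sup>2)"
    by (simp add: algebra_simps)
  then show ?thesis
    using assms unfolding cauchy_kernel_def
    by (simp add: divide_simps add_nonneg_pos add_pos_nonneg power2_eq_square)
qed

lemma AE_in_measure_support:
  assumes "sets \<mu> = sets borel"
  shows "AE x in \<mu>. x \<in> measure_support \<mu>"
proof -
  define F where "F = {ball x e | x e. e > 0 \<and> emeasure \<mu> (ball x e) = 0}"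
  obtain F' where F': "F' \<subseteq> F" "countable F'" "\<Union>F' = \<Union>F"
    using Lindelof[of F] unfolding F_def by auto
  have "(\<Union>B\<in>F'. B) \<in> null_sets \<mu>"
    using F'(1) assms by (intro null_sets_UN'[OF F'(2)]) (auto simp: F_def null_sets_def)
  moreover have "{x \<in> space \<mu>. x \<notin> measure_support \<mu>} \<subseteq> \<Union>F"
    by (force simp: F_def measure_support_def zero_less_iff_neq_zero)
  ultimately show ?thesis
    using F'(3) by (intro AE_I') auto
qed

lemma integrable_cauchy_kernel_shift:
  assumes "\<gamma> > 0" and "borel_prob \<mu>"
  shows "integrable \<mu> (\<lambda>t. cauchy_kernel \<gamma> (x - t))"
proof -
  interpret prob_space \<mu>
    using assms(2) by (simp add: borel_prob_def)
  have sets_eq: "sets \<mu> = sets borel"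
    using assms(2) by (simp add: borel_prob_def)
  have "(\<lambda>t. cauchy_kernel \<gamma> (x - t)) \<in> borel_measurable \<mu>"
    by (subst measurable_cong_sets[OF sets_eq refl]) measurable
  then show ?thesis
    using cauchy_kernel_le[OF assms(1)] cauchy_kernel_pos[OF assms(1)]
    by (intro integrable_const_bound[where B = "1 / (pi * \<gamma>)"]) (auto simp: less_imp_le)
qed

lemma cauchy_conv_nonneg:
  assumes "\<gamma> > 0"
  shows "0 \<le> cauchy_conv \<gamma> \<mu> x"
  unfolding cauchy_conv_def using cauchy_kernel_pos[OF assms] by (intro integral_nonneg_AE) (simp add: less_imp_le)

lemma cauchy_conv_le:
  assumes "\<gamma> > 0" and "borel_prob \<mu>"
  shows "cauchy_conv \<gamma> \<mu> x \<le> 1 / (pi * \<gamma>)"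
proof -
  interpret prob_space \<mu>
    using assms(2) by (simp add: borel_prob_def)
  have "cauchy_conv \<gamma> \<mu> x \<le> (\<integral>t. 1 / (pi * \<gamma>) \<partial>\<mu>)"
    unfolding cauchy_conv_def using integrable_cauchy_kernel_shift[OF assms]
    by (intro integral_mono) (auto intro: cauchy_kernel_le[OF assms(1)])
  then show ?thesis
    by (simp add: prob_space)
qed

lemma cauchy_conv_ge:
  assumes "\<gamma> > 0" and "borel_prob \<mu>" and "measure_support \<mu> \<subseteq> {-M..M}"
  shows "cauchy_kernel \<gamma> x / (2 + 2 * M\<^sup>2 / \<gamma>\<^sup>2) \<le> cauchy_conv \<gamma> \<mu> x"
proof -
  interpret prob_space \<mu>
    using assms(2) by (simp add: borel_prob_def)
  have bound: "cauchy_kernel \<gamma> x / (2 + 2 * M\<^sup>2 / \<gamma>\<^sup>2) \<le> cauchy_kernel \<gamma> (x - t)"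
    if "t \<in> measure_support \<mu>" for t
  proof -
    have "t\<^sup>2 \<le> M\<^sup>2"
      using that assms(3) by (auto simp: abs_le_square_iff[symmetric] abs_le_iff)
    then have "2 + 2 * t\<^sup>2 / \<gamma>\<^sup>2 \<le> 2 + 2 * M\<^sup>2 / \<gamma>\<^sup>2"
      by (simp add: divide_right_mono)
    then have "cauchy_kernel \<gamma> x \<le> (2 + 2 * M\<^sup>2 / \<gamma>\<^sup>2) * cauchy_kernel \<gamma> (x - t)"
      using cauchy_kernel_le_shift[OF assms(1), of x t] cauchy_kernel_pos[OF assms(1), of "x - t"]
      by (meson less_imp_le mult_right_mono order_trans)
    moreover have "0 < 2 + 2 * M\<^sup>2 / \<gamma>\<^sup>2"
      by (simp add: add_pos_nonneg)
    ultimately show ?thesis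
      by (simp add: pos_divide_le_eq mult.commute)
  qed
  have "AE t in \<mu>. t \<in> measure_support \<mu>"
    using AE_in_measure_support assms(2) unfolding borel_prob_def by blast
  then have "AE t in \<mu>. cauchy_kernel \<gamma> x / (2 + 2 * M\<^sup>2 / \<gamma>\<^sup>2) \<le> cauchy_kernel \<gamma> (x - t)"
    by (rule eventually_mono) (rule bound)
  then have "(\<integral>t. cauchy_kernel \<gamma> x / (2 + 2 * M\<^sup>2 / \<gamma>\<^sup>2) \<partial>\<mu>) \<le> cauchy_conv \<gamma> \<mu> x"
    unfolding cauchy_conv_def using integrable_cauchy_kernel_shift[OF assms(1,2)]
    by (intro integral_mono_AE) auto
  then show ?thesis
    by (simp add: prob_space)
qed

lemma cauchy_conv_le_second_moment:
  assumes "\<gamma> > 0" and "borel_prob \<nu>" and "integrable \<nu> (\<lambda>t. t\<^sup>2)"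
  shows "cauchy_conv \<gamma> \<nu> x \<le> (2 + 2 * (\<integral>t. t\<^sup>2 \<partial>\<nu>) / \<gamma>\<^sup>2) * cauchy_kernel \<gamma> x"
proof -
  interpret prob_space \<nu>
    using assms(2) by (simp add: borel_prob_def)
  have "cauchy_conv \<gamma> \<nu> x \<le> (\<integral>t. (2 + 2 * t\<^sup>2 / \<gamma>\<^sup>2) * cauchy_kernel \<gamma> x \<partial>\<nu>)"
    unfolding cauchy_conv_def using integrable_cauchy_kernel_shift[OF assms(1,2)] assms(3)
    by (intro integral_mono)
       (use cauchy_kernel_le_shift[OF assms(1), of "x - t" "- t" for t] in auto)
  also have "\<dots> = (2 + 2 * (\<integral>t. t\<^sup>2 \<partial>\<nu>) / \<gamma>\<^sup>2) * cauchy_kernel \<gamma> x"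
    using assms(3) by (simp add: prob_space algebra_simps)
  finally show ?thesis .
qed

lemma cauchy_conv_measurable [measurable]:
  assumes "borel_prob \<mu>"
  shows "cauchy_conv \<gamma> \<mu> \<in> borel_measurable lborel"
proof -
  interpret prob_space \<mu>
    using assms by (simp add: borel_prob_def)
  have sets_eq: "sets (lborel \<Otimes>\<^sub>M \<mu>) = sets (lborel \<Otimes>\<^sub>M borel)"
    using assms unfolding borel_prob_def by (intro sets_pair_measure_cong) auto
  have "(\<lambda>(x, t). cauchy_kernel \<gamma> (x - t)) \<in> borel_measurable (lborel \<Otimes>\<^sub>M \<mu>)"
    by (subst measurable_cong_sets[OF sets_eq refl]) measurable
  then show ?thesis
    unfolding cauchy_conv_def by (rule borel_measurable_lebesgue_integral)
qed

lemma abs_ln_cauchy_kernel_le: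
  assumes "\<gamma> > 0"
  shows "\<bar>ln (cauchy_kernel \<gamma> x)\<bar> \<le> ln (1 + x\<^sup>2) + (\<bar>ln (\<gamma> / (pi * (1 + \<gamma>\<^sup>2)))\<bar> + \<bar>ln (pi * \<gamma>)\<bar>)"
proof -
  define c where "c = \<gamma> / (pi * (1 + \<gamma>\<^sup>2))"
  have "0 < c"
    using assms by (simp add: c_def add_pos_nonneg)
  have "\<bar>ln (cauchy_kernel \<gamma> x)\<bar> \<le> \<bar>ln (c / (1 + x\<^sup>2))\<bar> + \<bar>ln (1 / (pi * \<gamma>))\<bar>"
  proof (rule abs_ln_le_of_bounds)
    show "0 < c / (1 + x\<^sup>2)"
      using \<open>0 < c\<close> by (intro divide_pos_pos) (simp_all add: add_pos_nonneg)
  qed (use cauchy_kernel_ge_inverse_square[OF assms] cauchy_kernel_le[OF assms] in \<open>simp_all add: c_def\<close>)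
  also have "\<bar>ln (c / (1 + x\<^sup>2))\<bar> \<le> ln (1 + x\<^sup>2) + \<bar>ln c\<bar>"
  proof -
    have "ln (c / (1 + x\<^sup>2)) = ln c - ln (1 + x\<^sup>2)"
      using \<open>0 < c\<close> by (intro ln_divide_pos) (simp_all add: add_pos_nonneg)
    moreover have "0 \<le> ln (1 + x\<^sup>2)"
      by simp
    ultimately show ?thesis
      by arith
  qed
  finally show ?thesis
    using assms by (simp add: c_def ln_div)
qed

lemma abs_ln_cauchy_conv_le:
  assumes "\<gamma> > 0" and "borel_prob \<mu>" and "measure_support \<mu> \<subseteq> {-M..M}"
  shows "\<bar>ln (cauchy_conv \<gamma> \<mu> x)\<bar>
           \<le> \<bar>ln (cauchy_kernel \<gamma> x)\<bar> + (ln (2 + 2 * M\<^sup>2 / \<gamma>\<^sup>2) + \<bar>ln (pi * \<gamma>)\<bar>)"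
proof -
  define K where "K = 2 + 2 * M\<^sup>2 / \<gamma>\<^sup>2"
  have "2 \<le> K"
    by (simp add: K_def)
  have "\<bar>ln (cauchy_conv \<gamma> \<mu> x)\<bar> \<le> \<bar>ln (cauchy_kernel \<gamma> x / K)\<bar> + \<bar>ln (1 / (pi * \<gamma>))\<bar>"
  proof (rule abs_ln_le_of_bounds)
    show "0 < cauchy_kernel \<gamma> x / K"
      using \<open>2 \<le> K\<close> cauchy_kernel_pos[OF assms(1)] by simp
  qed (use cauchy_conv_ge[OF assms] cauchy_conv_le[OF assms(1,2)] in \<open>simp_all add: K_def\<close>)
  also have "\<bar>ln (cauchy_kernel \<gamma> x / K)\<bar> \<le> \<bar>ln (cauchy_kernel \<gamma> x)\<bar> + ln K"
  proof -
    have "ln (cauchy_kernel \<gamma> x / K) = ln (cauchy_kernel \<gamma> x) - ln K"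
      using \<open>2 \<le> K\<close> cauchy_kernel_pos[OF assms(1)] by (intro ln_divide_pos) auto
    moreover have "0 \<le> ln K"
      using \<open>2 \<le> K\<close> by simp
    ultimately show ?thesis
      by arith
  qed
  finally show ?thesis
    using assms(1) by (simp add: K_def ln_div)
qed

lemma return_zero_in_B_set:
  assumes "0 \<le> M"
  shows "return borel 0 \<in> B_set M"
proof -
  have support_zero: "x = 0" if "x \<in> measure_support (return borel 0)" for x :: real
  proof (rule ccontr)
    assume "x \<noteq> 0"
    then have "0 < dist x 0"
      by simp
    then have "0 < emeasure (return borel 0) (ball x (dist x 0))"
      using that unfolding measure_support_def by blast
    then show False
      by (simp add: indicator_def dist_commute)
  qed
  then show ?thesis
    using assms unfolding B_set_def borel_prob_def by (auto dest!: support_zero intro: prob_space_return)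
qed

lemma integrable_ln_cauchy_conv_mult_cauchy_conv:
  assumes "\<gamma> > 0" and "borel_prob \<mu>" and "compact (measure_support \<mu>)"
    and "borel_prob \<nu>" and "integrable \<nu> (\<lambda>x. x\<^sup>2)"
  shows "integrable lborel (\<lambda>x. ln (cauchy_conv \<gamma> \<mu> x) * cauchy_conv \<gamma> \<nu> x)"
proof -
  obtain M where "measure_support \<mu> \<subseteq> {-M..M}"
    using compact_imp_bounded[OF assms(3)] unfolding bounded_iff by (force simp: abs_le_iff)
  define D where "D = \<bar>ln (\<gamma> / (pi * (1 + \<gamma>\<^sup>2)))\<bar> + ln (2 + 2 * M\<^sup>2 / \<gamma>\<^sup>2) + 2 * \<bar>ln (pi * \<gamma>)\<bar>"
  have ln_bound: "\<bar>ln (cauchy_conv \<gamma> \<mu> x)\<bar> \<le> ln (1 + x\<^sup>2) + D" for x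
    using abs_ln_cauchy_conv_le[OF assms(1,2) \<open>measure_support \<mu> \<subseteq> {-M..M}\<close>, of x]
      abs_ln_cauchy_kernel_le[OF assms(1), of x]
    unfolding D_def by linarith
  define A where "A = 2 + 2 * (\<integral>t. t\<^sup>2 \<partial>\<nu>) / \<gamma>\<^sup>2"
  define E where "E = A * ((1 + \<gamma>\<^sup>2) / (pi * \<gamma>))"
  have decay: "cauchy_conv \<gamma> \<nu> x \<le> E / (1 + x\<^sup>2)" for x
  proof -
    have "cauchy_conv \<gamma> \<nu> x \<le> A * cauchy_kernel \<gamma> x"
      unfolding A_def by (rule cauchy_conv_le_second_moment[OF assms(1,4,5)])
    also have "\<dots> \<le> A * ((1 + \<gamma>\<^sup>2) / (pi * \<gamma>) / (1 + x\<^sup>2))"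
      by (rule mult_left_mono[OF cauchy_kernel_le_inverse_square[OF assms(1)]]) (simp add: A_def)
    finally show ?thesis
      by (simp add: E_def)
  qed
  have "integrable lborel (\<lambda>x. E * (ln (1 + x\<^sup>2) / (1 + x\<^sup>2)) + E * D * (1 / (1 + x\<^sup>2)))"
    using integrable_ln_one_plus_square_div integrable_inverse_one_plus_square
    by (intro Bochner_Integration.integrable_add integrable_mult_right)
  then show ?thesis
  proof (rule Bochner_Integration.integrable_bound)
    show "(\<lambda>x. ln (cauchy_conv \<gamma> \<mu> x) * cauchy_conv \<gamma> \<nu> x) \<in> borel_measurable lborel"
      using assms(2,4) by measurable
    show "AE x in lborel. norm (ln (cauchy_conv \<gamma> \<mu> x) * cauchy_conv \<gamma> \<nu> x)
            \<le> norm (E * (ln (1 + x\<^sup>2) / (1 + x\<^sup>2)) + E * D * (1 / (1 + x\<^sup>2)))"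
    proof (rule AE_I2)
      fix x
      have "norm (ln (cauchy_conv \<gamma> \<mu> x) * cauchy_conv \<gamma> \<nu> x)
              = \<bar>ln (cauchy_conv \<gamma> \<mu> x)\<bar> * cauchy_conv \<gamma> \<nu> x"
        using cauchy_conv_nonneg[OF assms(1)] by (simp add: abs_mult)
      also have "\<dots> \<le> (ln (1 + x\<^sup>2) + D) * (E / (1 + x\<^sup>2))"
        using ln_bound[of x] decay[of x] cauchy_conv_nonneg[OF assms(1), of \<nu> x]
        by (intro mult_mono) auto
      also have "\<dots> = E * (ln (1 + x\<^sup>2) / (1 + x\<^sup>2)) + E * D * (1 / (1 + x\<^sup>2))"
        by (simp add: algebra_simps add_divide_distrib)
      finally show "norm (ln (cauchy_conv \<gamma> \<mu> x) * cauchy_conv \<gamma> \<nu> x)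
            \<le> norm (E * (ln (1 + x\<^sup>2) / (1 + x\<^sup>2)) + E * D * (1 / (1 + x\<^sup>2)))"
        by simp
    qed
  qed
qed

theorem mainTheorem5:
  fixes \<gamma> M :: real
  assumes "\<gamma> > 0" and "M > 0"
  shows "(\<forall>\<mu>\<in>B_set M. \<forall>x.
            cauchy_kernel \<gamma> x / (2 + 2 * M\<^sup>2 / \<gamma>\<^sup>2) \<le> cauchy_conv \<gamma> \<mu> x
          \<and> cauchy_conv \<gamma> \<mu> x \<le> 1 / (pi * \<gamma>))
       \<and> (\<forall>t. (SUP \<mu>\<in>B_set M. \<bar>ln (cauchy_conv \<gamma> \<mu> t)\<bar>)
              \<le> \<bar>ln (cauchy_kernel \<gamma> t)\<bar> + (ln (2 + 2 * M\<^sup>2 / \<gamma>\<^sup>2) + \<bar>ln (pi * \<gamma>)\<bar>))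
       \<and> (\<forall>\<mu> \<nu>. borel_prob \<mu> \<and> compact (measure_support \<mu>)
              \<and> borel_prob \<nu> \<and> integrable \<nu> (\<lambda>x. x\<^sup>2)
           \<longrightarrow> integrable lborel (\<lambda>x. ln (cauchy_conv \<gamma> \<mu> x) * cauchy_conv \<gamma> \<nu> x))"
proof (intro conjI allI ballI impI)
  fix \<mu> x
  assume "\<mu> \<in> B_set M"
  then have "borel_prob \<mu>" and "measure_support \<mu> \<subseteq> {-M..M}"
    by (auto simp: B_set_def)
  then show "cauchy_kernel \<gamma> x / (2 + 2 * M\<^sup>2 / \<gamma>\<^sup>2) \<le> cauchy_conv \<gamma> \<mu> x"
    and "cauchy_conv \<gamma> \<mu> x \<le> 1 / (pi * \<gamma>)"
    using cauchy_conv_ge cauchy_conv_le assms(1) by auto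
next
  fix t
  show "(SUP \<mu>\<in>B_set M. \<bar>ln (cauchy_conv \<gamma> \<mu> t)\<bar>)
          \<le> \<bar>ln (cauchy_kernel \<gamma> t)\<bar> + (ln (2 + 2 * M\<^sup>2 / \<gamma>\<^sup>2) + \<bar>ln (pi * \<gamma>)\<bar>)"
    using return_zero_in_B_set[of M] assms abs_ln_cauchy_conv_le[OF assms(1)]
    by (intro cSUP_least) (auto simp: B_set_def)
next
  fix \<mu> \<nu>
  assume "borel_prob \<mu> \<and> compact (measure_support \<mu>) \<and> borel_prob \<nu> \<and> integrable \<nu> (\<lambda>x. x\<^sup>2)"
  then show "integrable lborel (\<lambda>x. ln (cauchy_conv \<gamma> \<mu> x) * cauchy_conv \<gamma> \<nu> x)"
    using integrable_ln_cauchy_conv_mult_cauchy_conv[OF assms(1)] by blast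
qed

end
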